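(* Assume $g$ satisfies (Hg), let $k>0$ and $(a,d)\in(0,1)\times(0,\infty)$. Suppose there exists $A\in(a,1)$ with $$\mathcal J^-(a,d,A,k):=\max_{v\in[0,A]}\big(d(k+1)v-dkA-g(v;a)\big)<0.$$ Then $c(a,d,k)<0$.
   Context: A function $g:\mathbb R\times[0,1]\to\mathbb R$, $(u,a)\mapsto g(u;a)$, satisfies (Hg) if it is $C^1$ and for every $a\in(0,1)$: $g(0;a)=g(a;a)=g(1;a)=0$, $g'(0;a)<0$, $g'(1;a)<0$, $g'(a;a)>0$ (where $g'=\partial_u g$), $g(v;a)>0$ for $v\in(-\infty,0)\cup(a,1)$ and $g(v;a)<0$ for $v\in(0,a)\cup(1,\infty)$. For $k>0$, $a\in(0,1)$, $d>0$ consider the problem: find $c\in\mathbb R$, $\Phi:\mathbb R\to\mathbb R$ with $-c\Phi'(\xi)=d(k\Phi(\xi+1)-(k+1)\Phi(\xi)+\Phi(\xi-1))+g(\Phi(\xi);a)$ for all $\xi$, $\Phi(-\infty)=0$, $\Phi(+\infty)=1$. It is known (Mallet-Paret) that under (Hg) a solution with $\Phi$ non-decreasing exists and the speed $c$ is uniquely determined; it is denoted $c(a,d,k)$. *)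

theory Defs
  imports "HOL-Analysis.Analysis"
begin

text \<open>(Hg): g is C^1 on R x [0,1]; gu is its partial derivative in u (g' in the paper),
  ga its partial derivative in a.\<close>
definition Hg :: "(real \<Rightarrow> real \<Rightarrow> real) \<Rightarrow> bool" where
  "Hg g \<longleftrightarrow>
     (\<exists>gu ga :: real \<Rightarrow> real \<Rightarrow> real.
        (\<forall>u a. a \<in> {0..1} \<longrightarrow>
           ((\<lambda>p. g (fst p) (snd p)) has_derivative (\<lambda>h. gu u a * fst h + ga u a * snd h))
             (at (u, a) within (UNIV \<times> {0..1}))) \<and>
        continuous_on (UNIV \<times> {0..1}) (\<lambda>p. gu (fst p) (snd p)) \<and>
        continuous_on (UNIV \<times> {0..1}) (\<lambda>p. ga (fst p) (snd p)) \<and>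
        (\<forall>a. 0 < a \<and> a < 1 \<longrightarrow>
           g 0 a = 0 \<and> g a a = 0 \<and> g 1 a = 0 \<and>
           gu 0 a < 0 \<and> gu 1 a < 0 \<and> gu a a > 0 \<and>
           (\<forall>v. (v < 0 \<or> (a < v \<and> v < 1)) \<longrightarrow> g v a > 0) \<and>
           (\<forall>v. ((0 < v \<and> v < a) \<or> 1 < v) \<longrightarrow> g v a < 0)))"

definition travelling_wave ::
  "(real \<Rightarrow> real \<Rightarrow> real) \<Rightarrow> real \<Rightarrow> real \<Rightarrow> real \<Rightarrow> real \<Rightarrow> (real \<Rightarrow> real) \<Rightarrow> bool" where
  "travelling_wave g a d k c \<Phi> \<longleftrightarrow>
     (\<forall>\<xi>. \<Phi> differentiable (at \<xi>)) \<and>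
     (\<forall>\<xi>. - c * deriv \<Phi> \<xi> =
            d * (k * \<Phi> (\<xi> + 1) - (k + 1) * \<Phi> \<xi> + \<Phi> (\<xi> - 1)) + g (\<Phi> \<xi>) a) \<and>
     (\<Phi> \<longlongrightarrow> 0) at_bot \<and> (\<Phi> \<longlongrightarrow> 1) at_top"

definition J_minus :: "(real \<Rightarrow> real \<Rightarrow> real) \<Rightarrow> real \<Rightarrow> real \<Rightarrow> real \<Rightarrow> real \<Rightarrow> real" where
  "J_minus g a d A k = (SUP v\<in>{0..A}. d * (k + 1) * v - d * k * A - g v a)"

end

theory Submission
  imports Defs
begin

text \<open>By the intermediate value theorem there is a \<open>\<xi>\<close> with \<open>\<Phi>(\<xi> + 1) = A\<close>. Monotonicity
  and \<open>\<Phi>(-\<infinity>) = 0\<close> give \<open>0 \<le> \<Phi>(\<xi> - 1)\<close> and \<open>v = \<Phi> \<xi> \<in> [0, A]\<close>, so the right-hand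
  side of the wave equation at \<open>\<xi>\<close> is at least
  \<open>d k A - d (k + 1) v + g(v; a) \<ge> -J\<^sup>-(a, d, A, k) > 0\<close>. Since \<open>\<Phi>' \<ge> 0\<close>, the left-hand side
  \<open>-c \<Phi>'(\<xi>)\<close> can only be positive if \<open>c < 0\<close>.\<close>

lemma Hg_continuous_on:
  assumes "Hg g" and "a \<in> {0..1}"
  shows "continuous_on S (\<lambda>v. g v a)"
proof -
  obtain gu ga where deriv: "\<And>u a. a \<in> {0..1} \<Longrightarrow>
      ((\<lambda>p. g (fst p) (snd p)) has_derivative (\<lambda>h. gu u a * fst h + ga u a * snd h))
        (at (u, a) within (UNIV \<times> {0..1}))"
    using \<open>Hg g\<close> unfolding Hg_def by blast
  have "continuous_on (UNIV \<times> {0..1}) (\<lambda>p. g (fst p) (snd p))"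
    by (rule has_derivative_continuous_on
        [where f' = "\<lambda>p h. gu (fst p) (snd p) * fst h + ga (fst p) (snd p) * snd h"])
       (use deriv in force)
  then have "continuous_on S (\<lambda>v. (\<lambda>p. g (fst p) (snd p)) (v, a))"
    by (rule continuous_on_compose2) (use \<open>a \<in> {0..1}\<close> in \<open>auto intro!: continuous_intros\<close>)
  then show ?thesis by simp
qed

lemma mono_tendsto_at_bot_le:
  fixes f :: "'a::linorder \<Rightarrow> 'b::linorder_topology"
  assumes "mono f" and "(f \<longlongrightarrow> L) at_bot"
  shows "L \<le> f x"
proof (rule tendsto_upperbound[OF \<open>(f \<longlongrightarrow> L) at_bot\<close>])
  show "\<forall>\<^sub>F y in at_bot. f y \<le> f x"
    unfolding eventually_at_bot_linorder using monoD[OF \<open>mono f\<close>] by blast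
qed (rule trivial_limit_at_bot_linorder)

lemma continuous_attains_between_limits:
  fixes f :: "real \<Rightarrow> real"
  assumes "continuous_on UNIV f" and "(f \<longlongrightarrow> L) at_bot" and "(f \<longlongrightarrow> U) at_top"
    and "L < y" and "y < U"
  shows "\<exists>x. f x = y"
proof -
  obtain x1 where "f x1 < y"
    using order_tendstoD(2)[OF \<open>(f \<longlongrightarrow> L) at_bot\<close> \<open>L < y\<close>]
    unfolding eventually_at_bot_linorder by blast
  moreover obtain x2 where "y < f x2"
    using order_tendstoD(1)[OF \<open>(f \<longlongrightarrow> U) at_top\<close> \<open>y < U\<close>]
    unfolding eventually_at_top_linorder by blast
  moreover have "connected (range f)"
    using connected_continuous_image[OF \<open>continuous_on UNIV f\<close> connected_UNIV] .
  ultimately have "y \<in> range f"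
    using connectedD_interval[of "range f" "f x1" "f x2" y] by simp
  then show ?thesis by auto
qed

lemma le_J_minus:
  assumes "continuous_on {0..A} (\<lambda>v. g v a)" and "v \<in> {0..A}"
  shows "d * (k + 1) * v - d * k * A - g v a \<le> J_minus g a d A k"
proof -
  let ?f = "\<lambda>v. d * (k + 1) * v - d * k * A - g v a"
  have "continuous_on {0..A} ?f"
    using assms(1) by (intro continuous_intros)
  then have "bdd_above (?f ` {0..A})"
    by (intro bounded_imp_bdd_above compact_imp_bounded compact_continuous_image) auto
  then show ?thesis
    unfolding J_minus_def using \<open>v \<in> {0..A}\<close> by (rule cSUP_upper2) simp
qed

theorem lemma5p1:
  fixes g :: "real \<Rightarrow> real \<Rightarrow> real" and a d k A :: real
  assumes "Hg g" and "0 < k" and "0 < a" and "a < 1" and "0 < d"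
    and "a < A" and "A < 1"
    and "J_minus g a d A k < 0"
  shows "\<forall>c \<Phi>. mono \<Phi> \<and> travelling_wave g a d k c \<Phi> \<longrightarrow> c < 0"
proof (intro allI impI)
  fix c and \<Phi> :: "real \<Rightarrow> real"
  assume "mono \<Phi> \<and> travelling_wave g a d k c \<Phi>"
  then have "mono \<Phi>" and differentiable: "\<And>\<xi>. \<Phi> differentiable (at \<xi>)"
    and wave: "\<And>\<xi>. - c * deriv \<Phi> \<xi> =
            d * (k * \<Phi> (\<xi> + 1) - (k + 1) * \<Phi> \<xi> + \<Phi> (\<xi> - 1)) + g (\<Phi> \<xi>) a"
    and "(\<Phi> \<longlongrightarrow> 0) at_bot" and "(\<Phi> \<longlongrightarrow> 1) at_top"
    unfolding travelling_wave_def by auto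
  have \<Phi>_nonneg: "0 \<le> \<Phi> x" for x
    using mono_tendsto_at_bot_le[OF \<open>mono \<Phi>\<close> \<open>(\<Phi> \<longlongrightarrow> 0) at_bot\<close>] .
  have "continuous_on UNIV \<Phi>"
    using differentiable by (simp add: continuous_at_imp_continuous_on differentiable_imp_continuous_within)
  then obtain x where "\<Phi> x = A"
    using continuous_attains_between_limits \<open>(\<Phi> \<longlongrightarrow> 0) at_bot\<close> \<open>(\<Phi> \<longlongrightarrow> 1) at_top\<close>
      \<open>0 < a\<close> \<open>a < A\<close> \<open>A < 1\<close> by (meson less_trans)
  define \<xi> where "\<xi> = x - 1"
  have at_A: "\<Phi> (\<xi> + 1) = A"
    using \<open>\<Phi> x = A\<close> by (simp add: \<xi>_def)
  have "\<Phi> \<xi> \<in> {0..A}"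
    using \<Phi>_nonneg monoD[OF \<open>mono \<Phi>\<close>, of \<xi> "\<xi> + 1"] at_A by auto
  moreover have "continuous_on {0..A} (\<lambda>v. g v a)"
    using Hg_continuous_on \<open>Hg g\<close> \<open>0 < a\<close> \<open>a < 1\<close> by simp
  ultimately have "d * (k + 1) * \<Phi> \<xi> - d * k * A - g (\<Phi> \<xi>) a < 0"
    using le_J_minus \<open>J_minus g a d A k < 0\<close> by (meson le_less_trans)
  then have rhs_pos: "0 < d * (k * \<Phi> (\<xi> + 1) - (k + 1) * \<Phi> \<xi> + \<Phi> (\<xi> - 1)) + g (\<Phi> \<xi>) a"
    using at_A mult_nonneg_nonneg[OF less_imp_le[OF \<open>0 < d\<close>] \<Phi>_nonneg[of "\<xi> - 1"]]
    by (simp add: algebra_simps)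
  have deriv_nonneg: "0 \<le> deriv \<Phi> \<xi>"
    using mono_on_imp_deriv_nonneg[of UNIV \<Phi> "deriv \<Phi> \<xi>" \<xi>] \<open>mono \<Phi>\<close> differentiable
    by (simp add: DERIV_deriv_iff_real_differentiable)
  have "0 < - c * deriv \<Phi> \<xi>"
    using wave[of \<xi>] rhs_pos by simp
  with deriv_nonneg show "c < 0"
    by (auto simp: mult_less_0_iff)
qed

end
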